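(* In the model described in the context (with any $n$, $k$, $r$, $p$, $\epsilon$), let $p_b:=\frac{(1-\epsilon)^2}{2}$. Then for every $\delta\in(0,1)$, $$\Pr\Big[\max_{i\notin A_1} s_{1i}\ge np_b(1+\delta)^2\Big]\le (n-k)\,e^{-np_b\delta^2/3}+2r\,e^{-r\delta^2/6}.$$
   Context: Model: $\mathbf X$ is an $n\times n$ binary matrix. Let $\{A_i\}_{i=1}^r$ be a partition of the row indices and $\{B_i\}_{i=1}^r$ a partition of the column indices, with $|A_i|=|B_i|=k$ for all $i$ (so $n=rk$). Let $\xi_{ij}$, $1\le i,j\le r$, be i.i.d. Bernoulli$(1/2)$, and set $\mathbf X(a,b)=\xi_{ij}$ whenever $(a,b)\in A_i\times B_j$. The observed matrix $\mathbf Y$ with entries in $\{0,1,*\}$ is obtained by passing each entry of $\mathbf X$ independently through a binary symmetric channel with crossover probability $p\in[0,1/2)$, and then independently erasing each entry (replacing it with $*$) with probability $\epsilon\in[0,1)$. Row 1 belongs to $A_1$. Similarity: $s_{ij}=\sum_{l=1}^n \mathbf 1\{\mathbf Y(i,l)\ne *\}\mathbf 1\{\mathbf Y(j,l)\ne *\}\mathbf 1\{\mathbf Y(i,l)=\mathbf Y(j,l)\}$. *)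

theory Defs
  imports "HOL-Probability.Probability"
begin

(* Rows/columns are indexed 1..n, blocks 1..r.  A i / B i are the row / column blocks. *)
definition block_of :: "(nat \<Rightarrow> nat set) \<Rightarrow> nat \<Rightarrow> nat \<Rightarrow> nat" where
  "block_of A r a = (THE i. i \<in> {1..r} \<and> a \<in> A i)"

definition Xmat :: "(nat \<Rightarrow> nat set) \<Rightarrow> (nat \<Rightarrow> nat set) \<Rightarrow> nat \<Rightarrow> (nat \<times> nat \<Rightarrow> bool)
    \<Rightarrow> nat \<Rightarrow> nat \<Rightarrow> bool" where
  "Xmat A B r xi a b = xi (block_of A r a, block_of B r b)"

(* Observed matrix: None = erasure symbol; flip = BSC crossover indicator; erase = erasure indicator *)
definition Ymat :: "(nat \<Rightarrow> nat set) \<Rightarrow> (nat \<Rightarrow> nat set) \<Rightarrow> nat \<Rightarrow> (nat \<times> nat \<Rightarrow> bool)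
    \<Rightarrow> (nat \<times> nat \<Rightarrow> bool) \<Rightarrow> (nat \<times> nat \<Rightarrow> bool) \<Rightarrow> nat \<Rightarrow> nat \<Rightarrow> bool option" where
  "Ymat A B r xi flip erase a b =
     (if erase (a, b) then None else Some (Xmat A B r xi a b \<noteq> flip (a, b)))"

definition simil :: "nat \<Rightarrow> (nat \<Rightarrow> nat \<Rightarrow> bool option) \<Rightarrow> nat \<Rightarrow> nat \<Rightarrow> nat" where
  "simil n Y i j = card {l \<in> {1..n}. Y i l \<noteq> None \<and> Y j l \<noteq> None \<and> Y i l = Y j l}"

(* joint law of (xi, crossover indicators, erasure indicators), all independent *)
definition model_pmf :: "nat \<Rightarrow> nat \<Rightarrow> real \<Rightarrow> real
    \<Rightarrow> ((nat \<times> nat \<Rightarrow> bool) \<times> (nat \<times> nat \<Rightarrow> bool) \<times> (nat \<times> nat \<Rightarrow> bool)) pmf" where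
  "model_pmf n r p \<epsilon> =
     pair_pmf (Pi_pmf ({1..r} \<times> {1..r}) False (\<lambda>_. bernoulli_pmf (1/2)))
       (pair_pmf (Pi_pmf ({1..n} \<times> {1..n}) False (\<lambda>_. bernoulli_pmf p))
                 (Pi_pmf ({1..n} \<times> {1..n}) False (\<lambda>_. bernoulli_pmf \<epsilon>)))"

end

theory Submission
  imports Defs
begin

(*
  Let i be a row outside A 1 and b its row block.  Rows 1 and i of X agree exactly on the column
  blocks B j with \<xi>(1, j) = \<xi>(b, j), so they agree on k * m columns where m ~ Bin(r, 1/2);
  by the multiplicative Chernoff bound m \<ge> (1 + \<delta>) r / 2 has probability at most
  exp (- r \<delta>^2 / 6) for each of the r - 1 blocks b.  Otherwise s_{1i} is a sum of n independent
  indicators, the l-th with mean (1 - \<epsilon>)^2 (p^2 + (1 - p)^2) or (1 - \<epsilon>)^2 2p(1 - p) according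
  as the rows agree in column l or not; their total mean is then at most n p_b (1 + \<delta>), and
  Chernoff again bounds s_{1i} \<ge> n p_b (1 + \<delta>)^2 by exp (- n p_b \<delta>^2 / 3).  A union bound
  over the blocks and the n - k rows concludes.
*)

lemma ln_add_one_ge_div:
  fixes x :: real
  assumes "0 \<le> x"
  shows "2 * x / (2 + x) \<le> ln (1 + x)"
proof -
  define g where "g = (\<lambda>x::real. ln (1 + x) - 2 * x / (2 + x))"
  have "g 0 \<le> g x"
  proof (rule DERIV_nonneg_imp_nondecreasing[OF assms])
    fix y :: real
    assume y: "0 \<le> y" "y \<le> x"
    have "DERIV g y :> 1 / (1 + y) - 4 / (2 + y)^2"
      unfolding g_def using y
      by (auto intro!: derivative_eq_intros simp: power2_eq_square field_simps)
    moreover have "4 / (2 + y)^2 \<le> 1 / (1 + y)"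
    proof -
      have "4 * (1 + y) \<le> 1 * (2 + y)^2" by (simp add: power2_eq_square algebra_simps)
      with y show ?thesis by (simp add: frac_le_eq divide_nonpos_pos)
    qed
    ultimately show "\<exists>d. DERIV g y :> d \<and> 0 \<le> d" by auto
  qed
  then show ?thesis by (simp add: g_def)
qed

lemma chernoff_exponent_le:
  fixes x :: real
  assumes "0 \<le> x" "x \<le> 1"
  shows "x - (1 + x) * ln (1 + x) \<le> - (x^2 / 3)"
proof -
  have "x + x^2 / 3 \<le> (1 + x) * (2 * x / (2 + x))"
  proof -
    have "(1 + x) * (2 * x) - (x + x^2 / 3) * (2 + x) = x^2 * (1 - x) / 3"
      by (simp add: algebra_simps power2_eq_square)
    moreover have "x^2 * (1 - x) / 3 \<ge> 0" using assms by simp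
    ultimately show ?thesis using assms by (simp add: field_simps)
  qed
  also have "\<dots> \<le> (1 + x) * ln (1 + x)"
    using ln_add_one_ge_div[OF assms(1)] assms by (intro mult_left_mono) auto
  finally show ?thesis by linarith
qed

lemma exp_mult_le_chord:
  fixes t z :: real
  assumes "0 \<le> z" "z \<le> 1"
  shows "exp (t * z) \<le> 1 + z * (exp t - 1)"
proof -
  have "exp ((1 - z) *\<^sub>R 0 + z *\<^sub>R t) \<le> (1 - z) * exp 0 + z * exp t"
    using assms by (intro convex_onD[OF exp_convex]) auto
  then show ?thesis by (simp add: algebra_simps)
qed

lemma expectation_pmf_finite_type:
  fixes M :: "'a::finite pmf" and f :: "'a \<Rightarrow> real"
  shows "measure_pmf.expectation M f = (\<Sum>a\<in>UNIV. f a * pmf M a)"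
  by (rule integral_measure_pmf_real) auto

lemma expectation_exp_le_exp_expectation:
  fixes M :: "'a::finite pmf" and Z :: "'a \<Rightarrow> real"
  assumes "\<And>v. 0 \<le> Z v" "\<And>v. Z v \<le> 1" "0 \<le> t"
  shows "measure_pmf.expectation M (\<lambda>v. exp (t * Z v))
           \<le> exp ((exp t - 1) * measure_pmf.expectation M Z)"
proof -
  have "measure_pmf.expectation M (\<lambda>v. exp (t * Z v)) = (\<Sum>a\<in>UNIV. exp (t * Z a) * pmf M a)"
    by (rule expectation_pmf_finite_type)
  also have "\<dots> \<le> (\<Sum>a\<in>UNIV. (1 + Z a * (exp t - 1)) * pmf M a)"
    by (intro sum_mono mult_right_mono exp_mult_le_chord assms) auto
  also have "\<dots> = (\<Sum>a\<in>UNIV. pmf M a + (exp t - 1) * (Z a * pmf M a))"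
    by (simp add: algebra_simps)
  also have "\<dots> = (\<Sum>a\<in>UNIV. pmf M a) + (exp t - 1) * (\<Sum>a\<in>UNIV. Z a * pmf M a)"
    by (simp add: sum.distrib sum_distrib_left)
  also have "(\<Sum>a\<in>UNIV. pmf M a) = 1"
    by (rule sum_pmf_eq_1) auto
  also have "(\<Sum>a\<in>UNIV. Z a * pmf M a) = measure_pmf.expectation M Z"
    by (rule expectation_pmf_finite_type[symmetric])
  also have "1 + (exp t - 1) * measure_pmf.expectation M Z
               \<le> exp ((exp t - 1) * measure_pmf.expectation M Z)"
    by (rule exp_ge_add_one_self)
  finally show ?thesis .
qed

text \<open>Markov's inequality for \<open>exp (t * S)\<close> with \<open>t = ln (1 + \<delta>)\<close>.\<close>

lemma Chernoff_bound_Pi_pmf: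
  fixes L :: "'i set" and D :: "'i \<Rightarrow> 'a::finite pmf" and Z :: "'i \<Rightarrow> 'a \<Rightarrow> real"
  assumes L: "finite L" and Z0: "\<And>l v. 0 \<le> Z l v" and Z1: "\<And>l v. Z l v \<le> 1"
    and mean: "(\<Sum>l\<in>L. measure_pmf.expectation (D l) (Z l)) \<le> \<mu>"
    and \<delta>: "0 < \<delta>" "\<delta> \<le> 1"
  shows "measure_pmf.prob (Pi_pmf L dflt D) {g. (1 + \<delta>) * \<mu> \<le> (\<Sum>l\<in>L. Z l (g l))}
           \<le> exp (- (\<mu> * \<delta>^2 / 3))"
proof -
  let ?M = "Pi_pmf L dflt D"
  define t where "t = ln (1 + \<delta>)"
  have t: "t \<ge> 0" "exp t = 1 + \<delta>" using \<delta> by (auto simp: t_def)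
  define S where "S = (\<lambda>g. \<Sum>l\<in>L. Z l (g l))"
  define a where "a = (1 + \<delta>) * \<mu>"
  define E where "E = (\<lambda>l. measure_pmf.expectation (D l) (Z l))"
  have fin: "finite (set_pmf ?M)"
    by (rule finite_subset[OF set_Pi_pmf_subset'[OF L]]) (auto simp: L)
  have "0 \<le> (\<Sum>l\<in>L. E l)"
    unfolding E_def by (intro sum_nonneg integral_nonneg_AE) (auto intro: Z0)
  then have \<mu>0: "0 \<le> \<mu>" using mean unfolding E_def by linarith
  have "measure_pmf.prob ?M {g. a \<le> S g} = measure_pmf.expectation ?M (indicator {g. a \<le> S g})"
    by simp
  also have "\<dots> \<le> measure_pmf.expectation ?M (\<lambda>g. exp (t * (S g - a)))"
    using t by (intro integral_mono integrable_measure_pmf_finite fin) (auto simp: indicator_def)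
  also have "(\<lambda>g. exp (t * (S g - a))) = (\<lambda>g. exp (- (t * a)) * (\<Prod>l\<in>L. exp (t * Z l (g l))))"
    by (simp add: S_def exp_sum[OF L, symmetric] sum_distrib_left exp_add[symmetric] algebra_simps)
  also have "measure_pmf.expectation ?M \<dots>
               = exp (- (t * a)) * (\<Prod>l\<in>L. measure_pmf.expectation (D l) (\<lambda>v. exp (t * Z l v)))"
    by (subst integral_mult_right_zero, subst expectation_prod_Pi_pmf)
       (auto intro: integrable_measure_pmf_finite L)
  also have "\<dots> \<le> exp (- (t * a)) * (\<Prod>l\<in>L. exp (\<delta> * E l))"
  proof -
    have "measure_pmf.expectation (D l) (\<lambda>v. exp (t * Z l v)) \<le> exp (\<delta> * E l)" for l
      using expectation_exp_le_exp_expectation[of "Z l" t "D l"] t Z0 Z1 by (simp add: E_def)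
    then show ?thesis
      by (intro mult_left_mono prod_mono conjI integral_nonneg_AE) auto
  qed
  also have "\<dots> = exp (\<mu> * (\<delta> - (1 + \<delta>) * ln (1 + \<delta>)) + \<delta> * ((\<Sum>l\<in>L. E l) - \<mu>))"
    by (simp add: exp_sum[OF L, symmetric] sum_distrib_left a_def t_def exp_add[symmetric]
        algebra_simps)
  also have "\<dots> \<le> exp (\<mu> * (- (\<delta>^2 / 3)))"
  proof -
    have "\<mu> * (\<delta> - (1 + \<delta>) * ln (1 + \<delta>)) \<le> \<mu> * (- (\<delta>^2 / 3))"
      using chernoff_exponent_le[of \<delta>] \<delta> \<mu>0 by (intro mult_left_mono) auto
    moreover have "\<delta> * ((\<Sum>l\<in>L. E l) - \<mu>) \<le> 0"
      using mean \<delta> unfolding E_def by (intro mult_nonneg_nonpos) auto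
    ultimately show ?thesis by simp
  qed
  finally show ?thesis by (simp add: S_def a_def)
qed

lemma zip_Pi_pmf:
  assumes "finite I"
  shows "map_pmf (\<lambda>(f, g) x. (f x, g x)) (pair_pmf (Pi_pmf I d1 D1) (Pi_pmf I d2 D2))
           = Pi_pmf I (d1, d2) (\<lambda>x. pair_pmf (D1 x) (D2 x))"
proof (rule pmf_eqI)
  fix h :: "'a \<Rightarrow> 'b \<times> 'c"
  let ?zip = "\<lambda>(f :: 'a \<Rightarrow> 'b, g :: 'a \<Rightarrow> 'c) x. (f x, g x)"
  have inj: "inj ?zip" by (auto simp: inj_def fun_eq_iff)
  have h: "h = ?zip (fst \<circ> h, snd \<circ> h)" by simp
  have "pmf (map_pmf ?zip (pair_pmf (Pi_pmf I d1 D1) (Pi_pmf I d2 D2))) h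
      = pmf (pair_pmf (Pi_pmf I d1 D1) (Pi_pmf I d2 D2)) (fst \<circ> h, snd \<circ> h)"
    by (subst h, rule pmf_map_inj'[OF inj])
  also have "\<dots> = pmf (Pi_pmf I d1 D1) (fst \<circ> h) * pmf (Pi_pmf I d2 D2) (snd \<circ> h)"
    by (rule pmf_pair)
  also have "\<dots> = pmf (Pi_pmf I (d1, d2) (\<lambda>x. pair_pmf (D1 x) (D2 x))) h"
  proof (cases "\<forall>x. x \<notin> I \<longrightarrow> h x = (d1, d2)")
    case True
    have "pmf (pair_pmf M N) z = pmf M (fst z) * pmf N (snd z)" for M N and z :: "'b \<times> 'c"
      by (cases z) (simp add: pmf_pair)
    with True assms show ?thesis by (simp add: pmf_Pi prod.distrib)
  next
    case False
    then obtain x where "x \<notin> I" "fst (h x) \<noteq> d1 \<or> snd (h x) \<noteq> d2"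
      by (auto simp: prod_eq_iff)
    then show ?thesis using assms by (auto simp: pmf_Pi)
  qed
  finally show "pmf (map_pmf ?zip (pair_pmf (Pi_pmf I d1 D1) (Pi_pmf I d2 D2))) h
      = pmf (Pi_pmf I (d1, d2) (\<lambda>x. pair_pmf (D1 x) (D2 x))) h" .
qed

lemma Pi_pmf_row:
  assumes "finite J"
  shows "map_pmf (\<lambda>\<omega> l. \<omega> (a, l)) (Pi_pmf ({a} \<times> J) d (\<lambda>_. D)) = Pi_pmf J d (\<lambda>_. D)"
proof -
  have "bij_betw (Pair a) J ({a} \<times> J)" by (auto simp: bij_betw_def inj_on_def)
  from Pi_pmf_bij_betw[OF assms this, of d D] show ?thesis by (simp add: o_def)
qed

lemma Pi_pmf_two_rows:
  assumes "finite I" "finite J" "a \<in> I" "b \<in> I" "a \<noteq> b"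
  shows "map_pmf (\<lambda>\<omega> l. (\<omega> (a, l), \<omega> (b, l))) (Pi_pmf (I \<times> J) d (\<lambda>_. D))
           = Pi_pmf J (d, d) (\<lambda>_. pair_pmf D D)"
proof -
  let ?Ra = "{a} \<times> J" and ?Rb = "{b} \<times> J"
  let ?P = "pair_pmf (Pi_pmf ?Ra d (\<lambda>_. D)) (Pi_pmf ?Rb d (\<lambda>_. D))"
  have outside: "\<omega> x = d" if "\<omega> \<in> set_pmf (Pi_pmf K d (\<lambda>_. D))" "finite K" "x \<notin> K" for \<omega> x K
    using that set_Pi_pmf_subset[of K d "\<lambda>_. D"] by blast
  have "map_pmf (\<lambda>\<omega> l. (\<omega> (a, l), \<omega> (b, l))) (Pi_pmf (I \<times> J) d (\<lambda>_. D))
      = map_pmf (\<lambda>\<omega> l. (\<omega> (a, l), \<omega> (b, l))) (Pi_pmf (?Ra \<union> ?Rb) d (\<lambda>_. D))"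
    using assms outside[of _ "I \<times> J"]
    by (subst Pi_pmf_subset[of "I \<times> J"]) (auto simp: map_pmf_comp fun_eq_iff intro!: map_pmf_cong)
  also have "\<dots> = map_pmf (\<lambda>(f, g) l. (f (a, l), g (b, l))) ?P"
  proof -
    have "Pi_pmf (?Ra \<union> ?Rb) d (\<lambda>_. D)
        = map_pmf (\<lambda>(f, g) x. if x \<in> ?Ra then f x else g x) ?P"
      using assms by (intro Pi_pmf_union) auto
    then show ?thesis
      using assms outside[of _ ?Ra] outside[of _ ?Rb]
      by (auto simp: map_pmf_comp fun_eq_iff intro!: map_pmf_cong; metis)
  qed
  also have "\<dots> = map_pmf (\<lambda>(f, g) l. (f l, g l))
                   (pair_pmf (map_pmf (\<lambda>\<omega> l. \<omega> (a, l)) (Pi_pmf ?Ra d (\<lambda>_. D)))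
                             (map_pmf (\<lambda>\<omega> l. \<omega> (b, l)) (Pi_pmf ?Rb d (\<lambda>_. D))))"
    by (simp add: map_pair[symmetric] map_pmf_comp case_prod_unfold)
  also have "\<dots> = Pi_pmf J (d, d) (\<lambda>_. pair_pmf D D)"
    by (simp add: Pi_pmf_row zip_Pi_pmf assms(2))
  finally show ?thesis .
qed

lemma prob_pair_pmf_le:
  assumes "\<And>x. measure_pmf.prob N {y. (x, y) \<in> S} \<le> c"
  shows "measure_pmf.prob (pair_pmf M N) S \<le> c"
proof -
  have c: "0 \<le> c" using assms[of undefined] measure_nonneg[of N] by (meson order_trans)
  have "emeasure (pair_pmf M N) S = (\<integral>\<^sup>+x. emeasure (map_pmf (Pair x) N) S \<partial>M)"
    by (simp add: pair_pmf_def map_pmf_def)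
  also have "\<dots> = (\<integral>\<^sup>+x. ennreal (measure_pmf.prob N {y. (x, y) \<in> S}) \<partial>M)"
    by (intro nn_integral_cong) (simp add: measure_pmf.emeasure_eq_measure vimage_def)
  also have "\<dots> \<le> (\<integral>\<^sup>+x. ennreal c \<partial>M)"
    by (intro nn_integral_mono ennreal_leI assms)
  also have "\<dots> = ennreal c" by (simp add: measure_pmf.emeasure_space_1)
  finally show ?thesis using c by (simp add: measure_pmf.emeasure_eq_measure)
qed

lemma prob_UN_le_card_mult:
  assumes "finite I" "\<And>i. i \<in> I \<Longrightarrow> measure_pmf.prob M (S i) \<le> c"
  shows "measure_pmf.prob M (\<Union>i\<in>I. S i) \<le> real (card I) * c"
proof -
  have "measure_pmf.prob M (\<Union>i\<in>I. S i) \<le> (\<Sum>i\<in>I. measure_pmf.prob M (S i))"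
    using assms(1) by (intro measure_pmf.finite_measure_subadditive_finite) auto
  also have "\<dots> \<le> (\<Sum>i\<in>I. c)" by (intro sum_mono assms(2))
  finally show ?thesis by simp
qed

lemma of_nat_card_filter_eq_sum:
  assumes "finite A"
  shows "real (card {x\<in>A. P x}) = (\<Sum>x\<in>A. if P x then 1 else 0)"
proof -
  have "real (card {x\<in>A. P x}) = (\<Sum>x\<in>{x\<in>A. P x}. 1)" by simp
  also have "\<dots> = (\<Sum>x\<in>A. if P x then 1 else 0)" using assms by (rule sum.inter_filter)
  finally show ?thesis .
qed

lemma block_of_eq:
  assumes "disjoint_family_on C {1..r}" "j \<in> {1..r}" "a \<in> C j"
  shows "block_of C r a = j"
  unfolding block_of_def
proof (rule the_equality)
  show "j \<in> {1..r} \<and> a \<in> C j" using assms by simp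
  fix i
  assume "i \<in> {1..r} \<and> a \<in> C i"
  then show "i = j" using assms unfolding disjoint_family_on_def by blast
qed

locale equipartition =
  fixes C :: "nat \<Rightarrow> nat set" and r k n :: nat
  assumes disjoint: "disjoint_family_on C {1..r}"
    and covers: "(\<Union>i\<in>{1..r}. C i) = {1..n}"
    and card_block: "\<And>i. i \<in> {1..r} \<Longrightarrow> card (C i) = k"
begin

lemma block_of_mem:
  assumes "a \<in> {1..n}"
  shows "block_of C r a \<in> {1..r}" "a \<in> C (block_of C r a)"
proof -
  obtain j where "j \<in> {1..r}" "a \<in> C j" using assms covers by blast
  then show "block_of C r a \<in> {1..r}" "a \<in> C (block_of C r a)"
    using block_of_eq[OF disjoint] by simp_all
qed

lemma card_filter_block_of:
  "card {l \<in> {1..n}. P (block_of C r l)} = k * card {j \<in> {1..r}. P j}"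
proof -
  let ?J = "{j \<in> {1..r}. P j}"
  have "{l \<in> {1..n}. P (block_of C r l)} = (\<Union>j\<in>?J. C j)"
  proof (intro equalityI subsetI)
    fix l
    assume "l \<in> {l \<in> {1..n}. P (block_of C r l)}"
    then show "l \<in> (\<Union>j\<in>?J. C j)" using block_of_mem[of l] by auto
  next
    fix l
    assume "l \<in> (\<Union>j\<in>?J. C j)"
    then obtain j where "j \<in> ?J" "l \<in> C j" by blast
    moreover from this have "l \<in> {1..n}" using covers by blast
    ultimately show "l \<in> {l \<in> {1..n}. P (block_of C r l)}"
      using block_of_eq[OF disjoint] by auto
  qed
  also have "card \<dots> = (\<Sum>j\<in>?J. card (C j))"
  proof (rule card_UN_disjoint')
    show "disjoint_family_on C ?J" using disjoint by (rule disjoint_family_on_mono[rotated]) auto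
    show "finite (C j)" if "j \<in> ?J" for j
      using that covers by (intro finite_subset[of "C j" "{1..n}"]) auto
  qed simp
  also have "\<dots> = k * card ?J" using card_block by simp
  finally show ?thesis .
qed

lemma n_eq_k_mult_r: "n = k * r"
proof -
  have "{l \<in> {1..n}. True} = {1..n}" "{j \<in> {1..r}. True} = {1..r}" by auto
  with card_filter_block_of[of "\<lambda>_. True"] show ?thesis by simp
qed

end

definition agreements :: "nat \<Rightarrow> (nat \<Rightarrow> 'a) \<Rightarrow> (nat \<Rightarrow> 'a) \<Rightarrow> nat" where
  "agreements N u v = card {l \<in> {1..N}. u l = v l}"

definition block_signs_pmf :: "nat \<Rightarrow> (nat \<times> nat \<Rightarrow> bool) pmf" where
  "block_signs_pmf r = Pi_pmf ({1..r} \<times> {1..r}) False (\<lambda>_. bernoulli_pmf (1/2))"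

definition channel_pmf :: "nat \<Rightarrow> real \<Rightarrow> real \<Rightarrow> ((nat \<times> nat \<Rightarrow> bool) \<times> (nat \<times> nat \<Rightarrow> bool)) pmf"
  where "channel_pmf n p \<epsilon> =
    pair_pmf (Pi_pmf ({1..n} \<times> {1..n}) False (\<lambda>_. bernoulli_pmf p))
             (Pi_pmf ({1..n} \<times> {1..n}) False (\<lambda>_. bernoulli_pmf \<epsilon>))"

lemma model_pmf_eq: "model_pmf n r p \<epsilon> = pair_pmf (block_signs_pmf r) (channel_pmf n p \<epsilon>)"
  by (simp add: model_pmf_def block_signs_pmf_def channel_pmf_def)

lemma (in equipartition) agreements_Xmat:
  "agreements n (Xmat A C r \<xi> a) (Xmat A C r \<xi> a')
     = k * agreements r (\<lambda>j. \<xi> (block_of A r a, j)) (\<lambda>j. \<xi> (block_of A r a', j))"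
  unfolding agreements_def Xmat_def by (rule card_filter_block_of)

lemma prob_block_agreements_ge:
  assumes "b \<in> {1..r}" "b' \<in> {1..r}" "b \<noteq> b'" "0 < \<delta>" "\<delta> \<le> 1"
  shows "measure_pmf.prob (block_signs_pmf r)
           {\<xi>. (1 + \<delta>) * (real r / 2) \<le> real (agreements r (\<lambda>j. \<xi> (b, j)) (\<lambda>j. \<xi> (b', j)))}
         \<le> exp (- real r * \<delta>^2 / 6)"
proof -
  define Z where "Z = (\<lambda>(j::nat) (z::bool \<times> bool). if fst z = snd z then 1 else (0::real))"
  define \<psi> where "\<psi> = (\<lambda>(\<xi>::nat \<times> nat \<Rightarrow> bool) j. (\<xi> (b, j), \<xi> (b', j)))"
  let ?D = "pair_pmf (bernoulli_pmf (1/2)) (bernoulli_pmf (1/2))"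
  let ?S = "{g. (1 + \<delta>) * (real r / 2) \<le> (\<Sum>j\<in>{1..r}. Z j (g j))}"
  have "{\<xi>. (1 + \<delta>) * (real r / 2) \<le> real (agreements r (\<lambda>j. \<xi> (b, j)) (\<lambda>j. \<xi> (b', j)))}
      = \<psi> -` ?S"
    unfolding agreements_def of_nat_card_filter_eq_sum[OF finite_atLeastAtMost] Z_def \<psi>_def
    by simp
  moreover have "map_pmf \<psi> (block_signs_pmf r) = Pi_pmf {1..r} (False, False) (\<lambda>_. ?D)"
    unfolding \<psi>_def block_signs_pmf_def using assms by (intro Pi_pmf_two_rows) auto
  ultimately have "measure_pmf.prob (block_signs_pmf r)
           {\<xi>. (1 + \<delta>) * (real r / 2) \<le> real (agreements r (\<lambda>j. \<xi> (b, j)) (\<lambda>j. \<xi> (b', j)))}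
      = measure_pmf.prob (Pi_pmf {1..r} (False, False) (\<lambda>_. ?D)) ?S"
    by (metis measure_map_pmf)
  also have "\<dots> \<le> exp (- (real r / 2 * \<delta>^2 / 3))"
  proof (rule Chernoff_bound_Pi_pmf)
    show "(\<Sum>j\<in>{1..r}. measure_pmf.expectation ?D (Z j)) \<le> real r / 2"
      by (simp add: Z_def expectation_pmf_finite_type UNIV_bool pmf_pair sum.cartesian_product
          flip: UNIV_Times_UNIV)
  qed (use assms in \<open>auto simp: Z_def\<close>)
  also have "\<dots> = exp (- real r * \<delta>^2 / 6)" by simp
  finally show ?thesis .
qed

lemma prob_UN_block_agreements_ge:
  assumes "0 < \<delta>" "\<delta> \<le> 1"
  shows "measure_pmf.prob (block_signs_pmf r)
           (\<Union>b\<in>{2..r}. {\<xi>. (1 + \<delta>) * (real r / 2) \<le> real (agreements r (\<lambda>j. \<xi> (1, j)) (\<lambda>j. \<xi> (b, j)))})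
         \<le> 2 * real r * exp (- real r * \<delta>^2 / 6)"
proof -
  have "measure_pmf.prob (block_signs_pmf r)
           (\<Union>b\<in>{2..r}. {\<xi>. (1 + \<delta>) * (real r / 2) \<le> real (agreements r (\<lambda>j. \<xi> (1, j)) (\<lambda>j. \<xi> (b, j)))})
      \<le> real (card {2..r}) * exp (- real r * \<delta>^2 / 6)"
    using assms by (intro prob_UN_le_card_mult prob_block_agreements_ge) auto
  also have "\<dots> \<le> 2 * real r * exp (- real r * \<delta>^2 / 6)"
    by (intro mult_right_mono) auto
  finally show ?thesis .
qed

lemma simil_Ymat_eq_sum:
  "real (simil n (Ymat A B r \<xi> fl er) a a')
     = (\<Sum>l\<in>{1..n}. if \<not> er (a, l) \<and> \<not> er (a', l)
                      \<and> (Xmat A B r \<xi> a l \<noteq> fl (a, l)) = (Xmat A B r \<xi> a' l \<noteq> fl (a', l))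
                    then 1 else 0)"
  unfolding simil_def of_nat_card_filter_eq_sum[OF finite_atLeastAtMost]
  by (intro sum.cong) (auto simp: Ymat_def)

lemma expectation_noisy_agreement:
  fixes x x' :: bool
  assumes "0 \<le> p" "p \<le> 1" "0 \<le> \<epsilon>" "\<epsilon> \<le> 1"
  shows "measure_pmf.expectation
      (pair_pmf (pair_pmf (bernoulli_pmf p) (bernoulli_pmf \<epsilon>)) (pair_pmf (bernoulli_pmf p) (bernoulli_pmf \<epsilon>)))
      (\<lambda>((f, e), (f', e')). if \<not> e \<and> \<not> e' \<and> (x \<noteq> f) = (x' \<noteq> f') then 1 else 0 :: real)
    = (1 - \<epsilon>)^2 * (if x = x' then p^2 + (1 - p)^2 else 2 * p * (1 - p))"
  using assms
  by (cases x; cases x')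
     (simp_all add: expectation_pmf_finite_type UNIV_bool pmf_pair sum.cartesian_product
        algebra_simps power2_eq_square flip: UNIV_Times_UNIV)

lemma sum_agreement_probability_le:
  fixes x x' :: "'i \<Rightarrow> 'a" and p \<delta> :: real
  assumes "finite L" "0 \<le> p" "p \<le> 1" "0 \<le> \<delta>"
    and agree: "real (card {l\<in>L. x l = x' l}) \<le> (1 + \<delta>) * real (card L) / 2"
  shows "(\<Sum>l\<in>L. if x l = x' l then p^2 + (1 - p)^2 else 2 * p * (1 - p))
           \<le> (1 + \<delta>) * real (card L) / 2"
proof -
  define q where "q = 2 * p * (1 - p)"
  have q: "0 \<le> q" "1 - 2 * q = (1 - 2 * p)^2"
    using assms(2,3) by (simp add: q_def, simp add: q_def power2_eq_square algebra_simps)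
  have "(\<Sum>l\<in>L. if x l = x' l then p^2 + (1 - p)^2 else 2 * p * (1 - p))
      = (\<Sum>l\<in>L. q + (1 - 2 * q) * (if x l = x' l then 1 else 0))"
    by (intro sum.cong) (auto simp: q_def power2_eq_square algebra_simps)
  also have "\<dots> = real (card L) * q + (1 - 2 * q) * real (card {l\<in>L. x l = x' l})"
    using assms(1) by (simp add: sum.distrib sum_distrib_left of_nat_card_filter_eq_sum)
  also have "\<dots> \<le> real (card L) * q + (1 - 2 * q) * ((1 + \<delta>) * real (card L) / 2)"
    using agree q(2) by (intro add_left_mono mult_left_mono) auto
  also have "\<dots> = (1 + \<delta>) * real (card L) / 2 - \<delta> * real (card L) * q"
    by (simp add: field_simps)
  also have "\<dots> \<le> (1 + \<delta>) * real (card L) / 2"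
    using q(1) assms(4) by simp
  finally show ?thesis .
qed

lemma prob_simil_ge:
  assumes rows: "a \<in> {1..n}" "a' \<in> {1..n}" "a \<noteq> a'"
    and p: "0 \<le> p" "p \<le> 1" and \<epsilon>: "0 \<le> \<epsilon>" "\<epsilon> \<le> 1" and \<delta>: "0 < \<delta>" "\<delta> \<le> 1"
    and agree: "real (agreements n (Xmat A B r \<xi> a) (Xmat A B r \<xi> a')) \<le> (1 + \<delta>) * real n / 2"
  shows "measure_pmf.prob (channel_pmf n p \<epsilon>)
           {(fl, er). real n * ((1 - \<epsilon>)^2 / 2) * (1 + \<delta>)^2 \<le> real (simil n (Ymat A B r \<xi> fl er) a a')}
         \<le> exp (- real n * ((1 - \<epsilon>)^2 / 2) * \<delta>^2 / 3)"
proof -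
  let ?x = "Xmat A B r \<xi> a" and ?x' = "Xmat A B r \<xi> a'"
  let ?D = "pair_pmf (bernoulli_pmf p) (bernoulli_pmf \<epsilon>)"
  define Z where "Z = (\<lambda>l ((f, e), (f', e')).
    if \<not> e \<and> \<not> e' \<and> (?x l \<noteq> f) = (?x' l \<noteq> f') then 1 else 0 :: real)"
  define \<Phi> where "\<Phi> = (\<lambda>(fl :: nat \<times> nat \<Rightarrow> bool, er :: nat \<times> nat \<Rightarrow> bool) l.
    ((fl (a, l), er (a, l)), (fl (a', l), er (a', l))))"
  define \<mu> where "\<mu> = real n * ((1 - \<epsilon>)^2 / 2) * (1 + \<delta>)"
  let ?S = "{g. (1 + \<delta>) * \<mu> \<le> (\<Sum>l\<in>{1..n}. Z l (g l))}"
  have "{(fl, er). real n * ((1 - \<epsilon>)^2 / 2) * (1 + \<delta>)^2 \<le> real (simil n (Ymat A B r \<xi> fl er) a a')}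
      = \<Phi> -` ?S"
    by (auto simp: simil_Ymat_eq_sum \<Phi>_def Z_def \<mu>_def power2_eq_square mult_ac)
  moreover have "map_pmf \<Phi> (channel_pmf n p \<epsilon>)
      = Pi_pmf {1..n} ((False, False), (False, False)) (\<lambda>_. pair_pmf ?D ?D)"
  proof -
    have "map_pmf \<Phi> (channel_pmf n p \<epsilon>)
        = map_pmf (\<lambda>\<omega> l. (\<omega> (a, l), \<omega> (a', l))) (map_pmf (\<lambda>(f, g) x. (f x, g x)) (channel_pmf n p \<epsilon>))"
      unfolding \<Phi>_def by (simp add: map_pmf_comp case_prod_unfold)
    also have "\<dots> = Pi_pmf {1..n} ((False, False), (False, False)) (\<lambda>_. pair_pmf ?D ?D)"
      unfolding channel_pmf_def using rows by (simp add: zip_Pi_pmf Pi_pmf_two_rows)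
    finally show ?thesis .
  qed
  ultimately have "measure_pmf.prob (channel_pmf n p \<epsilon>)
           {(fl, er). real n * ((1 - \<epsilon>)^2 / 2) * (1 + \<delta>)^2 \<le> real (simil n (Ymat A B r \<xi> fl er) a a')}
      = measure_pmf.prob (Pi_pmf {1..n} ((False, False), (False, False)) (\<lambda>_. pair_pmf ?D ?D)) ?S"
    by (metis measure_map_pmf)
  also have "\<dots> \<le> exp (- (\<mu> * \<delta>^2 / 3))"
  proof (rule Chernoff_bound_Pi_pmf)
    have "(\<Sum>l\<in>{1..n}. measure_pmf.expectation (pair_pmf ?D ?D) (Z l))
        = (1 - \<epsilon>)^2 * (\<Sum>l\<in>{1..n}. if ?x l = ?x' l then p^2 + (1 - p)^2 else 2 * p * (1 - p))"
    proof -
      have "measure_pmf.expectation (pair_pmf ?D ?D) (Z l)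
          = (1 - \<epsilon>)^2 * (if ?x l = ?x' l then p^2 + (1 - p)^2 else 2 * p * (1 - p))" for l
        unfolding Z_def by (rule expectation_noisy_agreement[OF p \<epsilon>])
      then show ?thesis by (simp add: sum_distrib_left)
    qed
    also have "\<dots> \<le> (1 - \<epsilon>)^2 * ((1 + \<delta>) * real n / 2)"
    proof (rule mult_left_mono)
      show "(\<Sum>l\<in>{1..n}. if ?x l = ?x' l then p^2 + (1 - p)^2 else 2 * p * (1 - p))
          \<le> (1 + \<delta>) * real n / 2"
        using sum_agreement_probability_le[of "{1..n}" p \<delta> ?x ?x'] agree p \<delta>
        by (simp add: agreements_def)
    qed simp
    also have "\<dots> = \<mu>" by (simp add: \<mu>_def)
    finally show "(\<Sum>l\<in>{1..n}. measure_pmf.expectation (pair_pmf ?D ?D) (Z l)) \<le> \<mu>" .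
  qed (use \<delta> in \<open>auto simp: Z_def\<close>)
  also have "\<dots> \<le> exp (- real n * ((1 - \<epsilon>)^2 / 2) * \<delta>^2 / 3)"
  proof -
    have "real n * ((1 - \<epsilon>)^2 / 2) \<le> \<mu>"
      unfolding \<mu>_def using \<delta> by (intro mult_le_cancel_left1[THEN iffD2]) (auto simp: not_less)
    then have "real n * ((1 - \<epsilon>)^2 / 2) * \<delta>^2 \<le> \<mu> * \<delta>^2" by (rule mult_right_mono) simp
    then show ?thesis by (simp add: mult_ac)
  qed
  finally show ?thesis .
qed

locale block_model = rows: equipartition A r k n + cols: equipartition B r k n
  for A B :: "nat \<Rightarrow> nat set" and r k n :: nat +
  assumes one_in_first_block: "1 \<in> A 1" and r_pos: "1 \<le> r"
begin

lemma block_of_first_row: "block_of A r 1 = 1"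
  using r_pos one_in_first_block by (intro block_of_eq[OF rows.disjoint]) auto

lemma block_of_other_row:
  assumes "i \<in> {1..n} - A 1"
  shows "block_of A r i \<in> {2..r}"
proof -
  have "i \<in> {1..n}" "i \<notin> A 1" using assms by auto
  with rows.block_of_mem[of i] have "block_of A r i \<in> {1..r}" "block_of A r i \<noteq> 1" by auto
  then show ?thesis by simp
qed

lemma card_other_rows: "card ({1..n} - A 1) = n - k"
proof -
  have sub: "A 1 \<subseteq> {1..n}" using rows.covers r_pos by auto
  then have "finite (A 1)" by (rule finite_subset) simp
  with sub have "card ({1..n} - A 1) = card {1..n} - card (A 1)" by (intro card_Diff_subset)
  also have "card (A 1) = k" using r_pos by (intro rows.card_block) simp
  finally show ?thesis by simp
qed

lemma prob_simil_first_row_ge: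
  assumes i: "i \<in> {1..n} - A 1"
    and p: "0 \<le> p" "p \<le> 1" and \<epsilon>: "0 \<le> \<epsilon>" "\<epsilon> \<le> 1" and \<delta>: "0 < \<delta>" "\<delta> \<le> 1"
  shows "measure_pmf.prob (model_pmf n r p \<epsilon>)
           {(\<xi>, fl, er). real (agreements r (\<lambda>j. \<xi> (1, j)) (\<lambda>j. \<xi> (block_of A r i, j)))
                            < (1 + \<delta>) * (real r / 2)
              \<and> real n * ((1 - \<epsilon>)^2 / 2) * (1 + \<delta>)^2 \<le> real (simil n (Ymat A B r \<xi> fl er) 1 i)}
         \<le> exp (- real n * ((1 - \<epsilon>)^2 / 2) * \<delta>^2 / 3)"
  unfolding model_pmf_eq
proof (rule prob_pair_pmf_le, goal_cases)
  case (1 \<xi>)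
  show ?case
  proof (cases "real (agreements r (\<lambda>j. \<xi> (1, j)) (\<lambda>j. \<xi> (block_of A r i, j))) < (1 + \<delta>) * (real r / 2)")
    case True
    have "real (agreements n (Xmat A B r \<xi> 1) (Xmat A B r \<xi> i))
        = real k * real (agreements r (\<lambda>j. \<xi> (1, j)) (\<lambda>j. \<xi> (block_of A r i, j)))"
      using cols.agreements_Xmat[of A \<xi> 1 i] block_of_first_row by simp
    also have "\<dots> \<le> real k * ((1 + \<delta>) * (real r / 2))"
      using True by (intro mult_left_mono) auto
    also have "\<dots> = (1 + \<delta>) * real n / 2"
      using rows.n_eq_k_mult_r by simp
    finally have "real (agreements n (Xmat A B r \<xi> 1) (Xmat A B r \<xi> i)) \<le> (1 + \<delta>) * real n / 2" .
    then have "measure_pmf.prob (channel_pmf n p \<epsilon>) {(fl, er).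
        real n * ((1 - \<epsilon>)^2 / 2) * (1 + \<delta>)^2 \<le> real (simil n (Ymat A B r \<xi> fl er) 1 i)}
      \<le> exp (- real n * ((1 - \<epsilon>)^2 / 2) * \<delta>^2 / 3)"
      using i one_in_first_block by (intro prob_simil_ge p \<epsilon> \<delta>) auto
    moreover have "{w. (\<xi>, w) \<in> {(\<xi>, fl, er).
          real (agreements r (\<lambda>j. \<xi> (1, j)) (\<lambda>j. \<xi> (block_of A r i, j))) < (1 + \<delta>) * (real r / 2)
          \<and> real n * ((1 - \<epsilon>)^2 / 2) * (1 + \<delta>)^2 \<le> real (simil n (Ymat A B r \<xi> fl er) 1 i)}}
      = {(fl, er). real n * ((1 - \<epsilon>)^2 / 2) * (1 + \<delta>)^2 \<le> real (simil n (Ymat A B r \<xi> fl er) 1 i)}"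
      using True by auto
    ultimately show ?thesis by simp
  qed simp
qed

lemma prob_UN_simil_first_row_ge:
  assumes "0 \<le> p" "p \<le> 1" "0 \<le> \<epsilon>" "\<epsilon> \<le> 1" "0 < \<delta>" "\<delta> \<le> 1"
  shows "measure_pmf.prob (model_pmf n r p \<epsilon>) (\<Union>i\<in>{1..n} - A 1.
           {(\<xi>, fl, er). real (agreements r (\<lambda>j. \<xi> (1, j)) (\<lambda>j. \<xi> (block_of A r i, j)))
                            < (1 + \<delta>) * (real r / 2)
              \<and> real n * ((1 - \<epsilon>)^2 / 2) * (1 + \<delta>)^2 \<le> real (simil n (Ymat A B r \<xi> fl er) 1 i)})
         \<le> real (n - k) * exp (- real n * ((1 - \<epsilon>)^2 / 2) * \<delta>^2 / 3)"
  unfolding card_other_rows[symmetric] using assms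
  by (intro prob_UN_le_card_mult prob_simil_first_row_ge) auto

end

theorem lemma2:
  fixes n k r :: nat and p \<epsilon> \<delta> :: real and A B :: "nat \<Rightarrow> nat set"
  assumes "n = r * k"
    and "0 \<le> p" and "p < 1/2" and "0 \<le> \<epsilon>" and "\<epsilon> < 1"
    and "disjoint_family_on A {1..r}" and "(\<Union>i\<in>{1..r}. A i) = {1..n}"
    and "\<forall>i\<in>{1..r}. card (A i) = k"
    and "disjoint_family_on B {1..r}" and "(\<Union>i\<in>{1..r}. B i) = {1..n}"
    and "\<forall>i\<in>{1..r}. card (B i) = k"
    and "1 \<le> r" and "1 \<in> A 1"
    and "0 < \<delta>" and "\<delta> < 1"
  shows "measure_pmf.prob (model_pmf n r p \<epsilon>)
           {(xi, fl, er). \<exists>i\<in>{1..n} - A 1.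
              real (simil n (Ymat A B r xi fl er) 1 i) \<ge> real n * ((1 - \<epsilon>)^2 / 2) * (1 + \<delta>)^2}
         \<le> real (n - k) * exp (- real n * ((1 - \<epsilon>)^2 / 2) * \<delta>^2 / 3)
           + 2 * real r * exp (- real r * \<delta>^2 / 6)"
proof -
  \<comment> \<open>\<open>n = r * k\<close> follows from the partitions, and \<open>p < 1/2\<close> is only needed as \<open>p \<le> 1\<close>.\<close>
  interpret block_model A B r k n
    using assms by unfold_locales auto
  let ?M = "model_pmf n r p \<epsilon>"
  let ?agr = "\<lambda>\<xi> b. real (agreements r (\<lambda>j. \<xi> (1, j)) (\<lambda>j. \<xi> (b, j)))"
  let ?Bad = "\<Union>b\<in>{2..r}. {\<xi>. (1 + \<delta>) * (real r / 2) \<le> ?agr \<xi> b}"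
  let ?Good = "\<Union>i\<in>{1..n} - A 1. {(\<xi>, fl, er). ?agr \<xi> (block_of A r i) < (1 + \<delta>) * (real r / 2)
              \<and> real n * ((1 - \<epsilon>)^2 / 2) * (1 + \<delta>)^2 \<le> real (simil n (Ymat A B r \<xi> fl er) 1 i)}"
  have "{(xi, fl, er). \<exists>i\<in>{1..n} - A 1.
              real (simil n (Ymat A B r xi fl er) 1 i) \<ge> real n * ((1 - \<epsilon>)^2 / 2) * (1 + \<delta>)^2}
      \<subseteq> fst -` ?Bad \<union> ?Good"
    using block_of_other_row by (force simp: not_less[symmetric])
  then have "measure_pmf.prob ?M {(xi, fl, er). \<exists>i\<in>{1..n} - A 1.
              real (simil n (Ymat A B r xi fl er) 1 i) \<ge> real n * ((1 - \<epsilon>)^2 / 2) * (1 + \<delta>)^2}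
      \<le> measure_pmf.prob ?M (fst -` ?Bad) + measure_pmf.prob ?M ?Good"
    by (rule order_trans[OF measure_pmf.finite_measure_mono measure_Un_le]) simp_all
  also have "\<dots> \<le> 2 * real r * exp (- real r * \<delta>^2 / 6)
                  + real (n - k) * exp (- real n * ((1 - \<epsilon>)^2 / 2) * \<delta>^2 / 3)"
  proof (rule add_mono)
    have "measure_pmf.prob ?M (fst -` ?Bad) = measure_pmf.prob (block_signs_pmf r) ?Bad"
      unfolding model_pmf_eq by (simp flip: measure_map_pmf add: map_fst_pair_pmf)
    with assms show "measure_pmf.prob ?M (fst -` ?Bad) \<le> 2 * real r * exp (- real r * \<delta>^2 / 6)"
      using prob_UN_block_agreements_ge by simp
    show "measure_pmf.prob ?M ?Good \<le> real (n - k) * exp (- real n * ((1 - \<epsilon>)^2 / 2) * \<delta>^2 / 3)"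
      using assms by (intro prob_UN_simil_first_row_ge) auto
  qed
  finally show ?thesis by (simp only: add.commute)
qed

end
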